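(* Let $G=(V,E)$ be a finite, connected, undirected graph with $n\ge2$ vertices, let $r>0$, let $(X_i)_{i\ge0}$ be the Moran process on $G$ with fitness $r$, and let $\emptyset\subsetneq S\subsetneq V$. If $r\ge1$ then $$\mathbb{E}[\phi(X_{i+1})-\phi(X_i)\mid X_i=S]\ \ge\ \Big(1-\frac1r\Big)\frac{1}{n^3},$$ with equality if and only if $r=1$. If $r<1$ then $$\mathbb{E}[\phi(X_{i+1})-\phi(X_i)\mid X_i=S]\ <\ \frac{r-1}{n^3}.$$
   Context: The Moran process on $G$ with mutant fitness $r>0$ is the Markov chain $(X_i)_{i\ge0}$ whose state $X_i\subseteq V$ is the set of vertices occupied by mutants; every other vertex is occupied by a non-mutant of fitness $1$. Write $W(S)=r|S|+|V\setminus S|$ for the total fitness. Given $X_i=S$, one step is: choose a vertex $x$ with probability $r/W(S)$ if $x\in S$ and $1/W(S)$ if $x\notin S$; then choose a neighbour $y$ of $x$ uniformly at random; set $X_{i+1}=S\cup\{y\}$ if $x\in S$ and $X_{i+1}=S\setminus\{y\}$ if $x\notin S$. The potential of a set $X\subseteq V$ is $\phi(X)=\sum_{x\in X}\frac{1}{\deg x}$. *)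

theory Defs
  imports Complex_Main
begin

definition graph_conn :: "'a set \<Rightarrow> ('a \<Rightarrow> 'a \<Rightarrow> bool) \<Rightarrow> bool" where
  "graph_conn V E \<longleftrightarrow> finite V
     \<and> (\<forall>a b. E a b \<longrightarrow> a \<in> V \<and> b \<in> V)
     \<and> (\<forall>a b. E a b \<longrightarrow> E b a)
     \<and> (\<forall>a. \<not> E a a)
     \<and> (\<forall>u\<in>V. \<forall>v\<in>V. E\<^sup>*\<^sup>* u v)"

definition nbrs :: "'a set \<Rightarrow> ('a \<Rightarrow> 'a \<Rightarrow> bool) \<Rightarrow> 'a \<Rightarrow> 'a set" where
  "nbrs V E x = {y \<in> V. E x y}"

definition deg :: "'a set \<Rightarrow> ('a \<Rightarrow> 'a \<Rightarrow> bool) \<Rightarrow> 'a \<Rightarrow> nat" where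
  "deg V E x = card (nbrs V E x)"

definition potential :: "'a set \<Rightarrow> ('a \<Rightarrow> 'a \<Rightarrow> bool) \<Rightarrow> 'a set \<Rightarrow> real" where
  "potential V E X = (\<Sum>x\<in>X. 1 / real (deg V E x))"

definition total_fitness :: "'a set \<Rightarrow> real \<Rightarrow> 'a set \<Rightarrow> real" where
  "total_fitness V r S = r * real (card S) + real (card (V - S))"

definition fit :: "real \<Rightarrow> 'a set \<Rightarrow> 'a \<Rightarrow> real" where
  "fit r S x = (if x \<in> S then r else 1)"

text \<open>Outcome of one step when x reproduces onto neighbour y.\<close>
definition moran_update :: "'a set \<Rightarrow> 'a \<Rightarrow> 'a \<Rightarrow> 'a set" where
  "moran_update S x y = (if x \<in> S then S \<union> {y} else S - {y})"

definition moran_trans :: "'a set \<Rightarrow> ('a \<Rightarrow> 'a \<Rightarrow> bool) \<Rightarrow> real \<Rightarrow> 'a set \<Rightarrow> 'a set \<Rightarrow> real" where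
  "moran_trans V E r S T =
     (\<Sum>x\<in>V. \<Sum>y\<in>nbrs V E x.
        if moran_update S x y = T
        then fit r S x / total_fitness V r S * (1 / real (deg V E x)) else 0)"

definition expected_potential_change ::
  "'a set \<Rightarrow> ('a \<Rightarrow> 'a \<Rightarrow> bool) \<Rightarrow> real \<Rightarrow> 'a set \<Rightarrow> real" where
  "expected_potential_change V E r S =
     (\<Sum>T\<in>Pow V. moran_trans V E r S T * (potential V E T - potential V E S))"

end

theory Submission imports Defs begin

(* Expanding the one-step law, the expected change of the potential
   is a sum over all (reproducing vertex x, neighbour y) moves.  Only moves along
   an edge crossing the cut (S, V - S) change the state: a mutant x in S invading
   y adds 1/deg y, a non-mutant y invading x in S removes 1/deg x.  By symmetry of
   the edge relation both kinds of moves run over the same cut edges, so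
     E[change] = (r - 1) / W(S) * cut_weight S,
   where cut_weight S is the sum of 1/(deg x * deg y) over cut edges x in S,
   y not in S.  Connectivity gives a cut edge, and degrees are below n, so
   cut_weight S > 1/n^2; moreover 0 < W(S) <= max r 1 * n.  Hence the factor
   multiplying (r - 1) exceeds 1/(max r 1 * n^3), and both claims of the theorem
   follow by comparing signs of r - 1. *)

definition cut_weight :: "'a set \<Rightarrow> ('a \<Rightarrow> 'a \<Rightarrow> bool) \<Rightarrow> 'a set \<Rightarrow> real" where
  "cut_weight V E S = (\<Sum>x\<in>V. \<Sum>y\<in>V.
     if E x y \<and> x \<in> S \<and> y \<notin> S then 1 / (real (deg V E x) * real (deg V E y)) else 0)"

lemma expected_change_as_move_sum:
  assumes fin: "finite V" and SV: "S \<subseteq> V"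
  shows "expected_potential_change V E r S =
    (\<Sum>x\<in>V. \<Sum>y\<in>nbrs V E x. fit r S x / total_fitness V r S * (1 / real (deg V E x))
        * (potential V E (moran_update S x y) - potential V E S))"
proof -
  let ?c = "\<lambda>x. fit r S x / total_fitness V r S * (1 / real (deg V E x))"
  let ?d = "\<lambda>T. potential V E T - potential V E S"
  have update_in_Pow: "moran_update S x y \<in> Pow V" if "y \<in> nbrs V E x" for x y
    using that SV by (auto simp: moran_update_def nbrs_def)
  have "expected_potential_change V E r S =
     (\<Sum>T\<in>Pow V. \<Sum>x\<in>V. \<Sum>y\<in>nbrs V E x. (if moran_update S x y = T then ?c x * ?d T else 0))"
    unfolding expected_potential_change_def moran_trans_def
    by (simp add: sum_distrib_right; intro sum.cong refl; simp)
  also have "\<dots> = (\<Sum>x\<in>V. \<Sum>y\<in>nbrs V E x. \<Sum>T\<in>Pow V.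
                     (if moran_update S x y = T then ?c x * ?d T else 0))"
    by (subst sum.swap) (simp only: sum.swap[where A = "Pow V"])
  also have "\<dots> = (\<Sum>x\<in>V. \<Sum>y\<in>nbrs V E x. ?c x * ?d (moran_update S x y))"
    using update_in_Pow fin by (intro sum.cong refl) (simp add: sum.delta)
  finally show ?thesis .
qed

lemma potential_insert:
  "finite S \<Longrightarrow> y \<notin> S \<Longrightarrow> potential V E (insert y S) = potential V E S + 1 / real (deg V E y)"
  unfolding potential_def by simp

lemma potential_remove:
  "finite S \<Longrightarrow> y \<in> S \<Longrightarrow> potential V E (S - {y}) = potential V E S - 1 / real (deg V E y)"
  unfolding potential_def by (simp add: sum_diff1)

text \<open>Exact formula for the drift: mutant invasions across the cut gain, and
  non-mutant invasions across the same edges lose, the same weights; they differ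
  only by the fitness factor r versus 1.\<close>
lemma expected_change_cut_weight:
  assumes fin: "finite V" and sym: "\<And>a b. E a b \<Longrightarrow> E b a" and SV: "S \<subseteq> V"
  shows "expected_potential_change V E r S = (r - 1) / total_fitness V r S * cut_weight V E S"
proof -
  let ?W = "total_fitness V r S"
  define h where "h x y = (if E x y \<and> x \<in> S \<and> y \<notin> S
                             then 1 / (real (deg V E x) * real (deg V E y)) else 0)" for x y
  have finS: "finite S" using fin SV finite_subset by blast
  have "expected_potential_change V E r S =
    (\<Sum>x\<in>V. \<Sum>y\<in>V. if E x y then fit r S x / ?W * (1 / real (deg V E x))
        * (potential V E (moran_update S x y) - potential V E S) else 0)"
    unfolding expected_change_as_move_sum[OF fin SV] nbrs_def
    by (rule sum.cong[OF refl], rule sum.inter_filter[OF fin])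
  also have "\<dots> = (\<Sum>x\<in>V. \<Sum>y\<in>V. r / ?W * h x y - 1 / ?W * h y x)"
  proof (intro sum.cong refl)
    fix x y
    show "(if E x y then fit r S x / ?W * (1 / real (deg V E x))
        * (potential V E (moran_update S x y) - potential V E S) else 0)
          = r / ?W * h x y - 1 / ?W * h y x"
      using sym[of x y] sym[of y x]
      by (cases "E x y"; cases "x \<in> S"; cases "y \<in> S")
         (auto simp: h_def fit_def moran_update_def potential_insert[OF finS]
            potential_remove[OF finS] insert_absorb Un_insert_right)
  qed
  also have "\<dots> = r / ?W * (\<Sum>x\<in>V. \<Sum>y\<in>V. h x y) - 1 / ?W * (\<Sum>x\<in>V. \<Sum>y\<in>V. h y x)"
    by (simp add: sum_subtractf sum_distrib_left)
  also have "(\<Sum>x\<in>V. \<Sum>y\<in>V. h y x) = (\<Sum>x\<in>V. \<Sum>y\<in>V. h x y)"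
    by (rule sum.swap)
  also have "(\<Sum>x\<in>V. \<Sum>y\<in>V. h x y) = cut_weight V E S"
    unfolding cut_weight_def h_def ..
  finally show ?thesis by (simp add: diff_divide_distrib left_diff_distrib)
qed

lemma path_crosses_cut:
  assumes "R\<^sup>*\<^sup>* u v" "u \<in> S" "v \<notin> S"
  shows "\<exists>a b. R a b \<and> a \<in> S \<and> b \<notin> S"
  using assms by (induction rule: rtranclp_induct) auto

lemma deg_bounds:
  assumes g: "graph_conn V E" and "E a b"
  shows "1 \<le> deg V E a" "deg V E a < card V"
proof -
  have fin: "finite V" and ab: "a \<in> V" "b \<in> V" and irr: "\<not> E a a"
    using g assms(2) by (auto simp: graph_conn_def)
  have "b \<in> nbrs V E a" using ab assms(2) by (simp add: nbrs_def)
  moreover have "finite (nbrs V E a)" using fin by (simp add: nbrs_def)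
  ultimately have "card (nbrs V E a) > 0" using card_gt_0_iff by blast
  thus "1 \<le> deg V E a" unfolding deg_def by simp
  have "nbrs V E a \<subseteq> V - {a}" using irr by (auto simp: nbrs_def)
  hence "deg V E a \<le> card (V - {a})" unfolding deg_def using fin by (simp add: card_mono)
  also have "\<dots> < card V" using fin ab(1) by (meson card_Diff1_less)
  finally show "deg V E a < card V" .
qed

text \<open>In a connected graph every nontrivial cut has weight exceeding 1/n^2:
  it contains an edge, whose two endpoints have degree less than n.\<close>
lemma cut_weight_lower_bound:
  assumes g: "graph_conn V E" and "S \<noteq> {}" and "S \<subset> V"
  shows "cut_weight V E S > 1 / real (card V) ^ 2"
proof -
  define n where "n = real (card V)"
  define h where "h x y = (if E x y \<and> x \<in> S \<and> y \<notin> S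
                             then 1 / (real (deg V E x) * real (deg V E y)) else 0)" for x y
  have fin: "finite V" using g by (simp add: graph_conn_def)
  obtain u v where uv: "u \<in> S" "v \<in> V" "v \<notin> S" using assms(2,3) by blast
  have "E\<^sup>*\<^sup>* u v" using g uv assms(3) by (auto simp: graph_conn_def)
  then obtain a b where ab: "E a b" "a \<in> S" "b \<notin> S" using path_crosses_cut uv by metis
  have abV: "a \<in> V" "b \<in> V" and Eba: "E b a" using g ab by (auto simp: graph_conn_def)
  have da: "1 \<le> real (deg V E a)" "real (deg V E a) < n"
    using deg_bounds[OF g ab(1)] unfolding n_def by auto
  have db: "1 \<le> real (deg V E b)" "real (deg V E b) < n"
    using deg_bounds[OF g Eba] unfolding n_def by auto
  have "real (deg V E a) * real (deg V E b) < n * n"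
    using da db by (intro mult_strict_mono) auto
  hence "1 / n ^ 2 < h a b" unfolding h_def using ab da db
    by (simp add: power2_eq_square frac_less2)
  also have "h a b \<le> (\<Sum>y\<in>V. h a y)"
    using fin abV by (intro member_le_sum) (auto simp: h_def)
  also have "\<dots> \<le> (\<Sum>x\<in>V. \<Sum>y\<in>V. h x y)"
    using fin abV by (intro member_le_sum[where f = "\<lambda>x. \<Sum>y\<in>V. h x y"])
                     (auto simp: h_def intro: sum_nonneg)
  also have "\<dots> = cut_weight V E S" unfolding cut_weight_def h_def ..
  finally show ?thesis unfolding n_def .
qed

lemma total_fitness_bounds:
  assumes fin: "finite V" and "r > 0" and "S \<noteq> {}" and "S \<subseteq> V"
  shows "0 < total_fitness V r S" "total_fitness V r S \<le> max r 1 * real (card V)"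
proof -
  have finS: "finite S" using fin assms(4) finite_subset by blast
  have "card S > 0" using finS assms(3) by (simp add: card_gt_0_iff)
  thus "0 < total_fitness V r S"
    unfolding total_fitness_def using assms(2) by (simp add: add_pos_nonneg)
  have cs: "real (card S) + real (card (V - S)) = real (card V)"
    using card_Diff_subset[OF finS assms(4)] card_mono[OF fin assms(4)] by simp
  have "r * real (card S) \<le> max r 1 * real (card S)"
    and "real (card (V - S)) \<le> max r 1 * real (card (V - S))"
    by (intro mult_right_mono; simp)
       (simp add: mult_le_cancel_right1)
  thus "total_fitness V r S \<le> max r 1 * real (card V)"
    unfolding total_fitness_def by (simp flip: cs add: distrib_left)
qed

lemma drift_factor_bound:
  assumes g: "graph_conn V E" and "r > 0" and "S \<noteq> {}" and "S \<subset> V"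
  obtains q where "expected_potential_change V E r S = (r - 1) * q"
    and "1 / (max r 1 * real (card V) ^ 3) < q"
proof
  define n where "n = real (card V)"
  define W where "W = total_fitness V r S"
  have fin: "finite V" and sym: "\<And>a b. E a b \<Longrightarrow> E b a" using g by (auto simp: graph_conn_def)
  have W: "0 < W" "W \<le> max r 1 * n"
    using total_fitness_bounds[OF fin assms(2,3)] assms(4) unfolding W_def n_def by auto
  have C: "1 / n ^ 2 < cut_weight V E S"
    using cut_weight_lower_bound[OF g assms(3,4)] unfolding n_def .
  have n: "0 < n" unfolding n_def using fin assms(4) by (auto simp: card_gt_0_iff)
  show "expected_potential_change V E r S = (r - 1) * (cut_weight V E S / W)"
    using expected_change_cut_weight[OF fin sym] assms(4) unfolding W_def by auto
  have "1 / (max r 1 * n ^ 3) = (1 / n ^ 2) / (max r 1 * n)"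
    by (simp add: power3_eq_cube power2_eq_square field_simps)
  also have "\<dots> < cut_weight V E S / (max r 1 * n)"
    using C n by (intro divide_strict_right_mono) auto
  also have "\<dots> \<le> cut_weight V E S / W"
  proof (rule divide_left_mono)
    have "0 < 1 / n ^ 2" using n by simp
    thus "0 \<le> cut_weight V E S" using C by linarith
  qed (use W n in auto)
  finally show "1 / (max r 1 * real (card V) ^ 3) < cut_weight V E S / W" unfolding n_def .
qed

theorem lemma3:
  fixes V :: "'a set" and E :: "'a \<Rightarrow> 'a \<Rightarrow> bool" and r :: real and S :: "'a set"
  assumes "graph_conn V E"
    and "card V \<ge> 2"
    and "r > 0"
    and "S \<noteq> {}" and "S \<subset> V"
  shows "(r \<ge> 1 \<longrightarrow>
            expected_potential_change V E r S \<ge> (1 - 1 / r) * (1 / real (card V) ^ 3)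
          \<and> (expected_potential_change V E r S = (1 - 1 / r) * (1 / real (card V) ^ 3)
               \<longleftrightarrow> r = 1))
       \<and> (r < 1 \<longrightarrow> expected_potential_change V E r S < (r - 1) / real (card V) ^ 3)"
proof -
  obtain q where drift: "expected_potential_change V E r S = (r - 1) * q"
    and q: "1 / (max r 1 * real (card V) ^ 3) < q"
    using drift_factor_bound[OF assms(1,3,4,5)] by blast
  have bound_r: "(1 - 1 / r) * (1 / real (card V) ^ 3) = (r - 1) * (1 / (r * real (card V) ^ 3))"
    using assms(3) by (simp add: field_simps)
  show ?thesis
  proof (intro conjI impI)
    assume "r \<ge> 1"
    hence q_r: "1 / (r * real (card V) ^ 3) < q" using q by (simp add: max_def)
    show "expected_potential_change V E r S \<ge> (1 - 1 / r) * (1 / real (card V) ^ 3)"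
      unfolding drift bound_r using q_r \<open>r \<ge> 1\<close> by (intro mult_left_mono) auto
    show "expected_potential_change V E r S = (1 - 1 / r) * (1 / real (card V) ^ 3) \<longleftrightarrow> r = 1"
      unfolding drift bound_r
    proof
      assume "(r - 1) * q = (r - 1) * (1 / (r * real (card V) ^ 3))"
      hence "r - 1 = 0 \<or> q = 1 / (r * real (card V) ^ 3)" by (metis mult_left_cancel)
      thus "r = 1" using q_r by auto
    qed simp
  next
    assume "r < 1"
    hence "(r - 1) * q < (r - 1) * (1 / real (card V) ^ 3)"
      using q by (intro mult_strict_left_mono_neg) (auto simp: max_def)
    thus "expected_potential_change V E r S < (r - 1) / real (card V) ^ 3"
      unfolding drift by simp
  qed
qed

end
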